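(* For all integers $n\ge0$ and $d\ge1$, \[ \sum_{n_1>n_2>\cdots>n_d>n}\frac{a_{n_1}}{(2n_1-1)\cdots(2n_d-1)}=a_n . \]
   Context: $a_0=1$ and $a_n=\frac{1}{4^n}\binom{2n}{n}$ for $n\ge1$. *)

theory Defs
  imports "HOL-Analysis.Analysis"
begin

definition a :: "nat \<Rightarrow> real" where
  "a n = (if n = 0 then 1 else real (2 * n choose n) / 4 ^ n)"

end

theory Submission
  imports Defs
begin

text \<open>
  From \<open>(2m + 2) a\<^sub>m\<^sub>+\<^sub>1 = (2m + 1) a\<^sub>m\<close> one gets the telescoping identity
  \<open>a\<^sub>m / (2m - 1) = a\<^sub>m\<^sub>-\<^sub>1 - a\<^sub>m\<close> for \<open>m \<ge> 1\<close>, and \<open>(2m + 1) a\<^sub>m\<^sup>2 \<le> 1\<close> shows that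
  \<open>a\<^sub>m\<close> tends to \<open>0\<close>; so the sum over \<open>m > n\<close> is \<open>a\<^sub>n\<close>, which is the case \<open>d = 1\<close>.
  For larger \<open>d\<close>, fix the smallest index \<open>m = n\<^sub>d\<close>: by induction the sum over the other
  \<open>d - 1\<close> indices, all \<open>> m\<close>, is \<open>a\<^sub>m\<close>, and what is left is again the case \<open>d = 1\<close>.
  All terms are nonnegative, so the sum may be split along \<open>m\<close>.
\<close>

lemma a_eq_central_binomial: "a m = real (2 * m choose m) / 4 ^ m"
  by (simp add: a_def)

lemma a_nonneg: "0 \<le> a m"
  by (simp add: a_def)

lemma central_binomial_Suc:
  "Suc m * (2 * Suc m choose Suc m) = 2 * (2 * m + 1) * (2 * m choose m)"
proof -
  have "Suc m * (2 * Suc m choose Suc m) = 2 * (Suc m * (2 * m + 1 choose m))"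
    using Suc_times_binomial[of m "2 * m + 1"] by simp
  also have "Suc m * (2 * m + 1 choose m) = (2 * m + 1) * (2 * m choose m)"
    using binomial_absorb_comp[of "2 * m + 1" m] by simp
  finally show ?thesis by simp
qed

lemma a_Suc: "2 * real (Suc m) * a (Suc m) = (2 * real m + 1) * a m"
proof -
  have rec: "real (Suc m) * real (2 * Suc m choose Suc m)
      = 2 * (2 * real m + 1) * real (2 * m choose m)"
    using arg_cong[OF central_binomial_Suc[of m], of real]
    by (simp only: of_nat_mult of_nat_add of_nat_numeral of_nat_1)
  have "2 * real (Suc m) * a (Suc m)
      = 2 * (real (Suc m) * real (2 * Suc m choose Suc m)) / 4 ^ Suc m"
    by (simp only: a_eq_central_binomial[of "Suc m"] times_divide_eq_right mult.assoc)
  also have "\<dots> = (2 * real m + 1) * a m"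
    unfolding rec a_eq_central_binomial[of m] by (simp add: field_simps)
  finally show ?thesis .
qed

lemma decseq_a: "decseq a"
proof (rule decseq_SucI)
  fix m
  have "2 * real (Suc m) * a (Suc m) \<le> 2 * real (Suc m) * a m"
    using a_Suc[of m] a_nonneg[of m] by (simp add: mult_right_mono)
  then show "a (Suc m) \<le> a m"
    by (rule mult_left_le_imp_le) simp
qed

lemma a_squared_le: "(2 * real m + 1) * a m ^ 2 \<le> 1"
proof (induction m)
  case 0
  then show ?case by (simp add: a_def)
next
  case (Suc m)
  let ?x = "real m"
  have sq: "(2 * real (Suc m)) ^ 2 * a (Suc m) ^ 2 = (2 * ?x + 1) ^ 2 * a m ^ 2"
    using a_Suc[of m] by (metis power_mult_distrib)
  have "(2 * ?x + 2) ^ 2 * ((2 * real (Suc m) + 1) * a (Suc m) ^ 2)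
      = (2 * ?x + 3) * ((2 * real (Suc m)) ^ 2 * a (Suc m) ^ 2)"
    by (simp add: algebra_simps)
  also have "\<dots> = (2 * ?x + 3) * (2 * ?x + 1) * ((2 * ?x + 1) * a m ^ 2)"
    unfolding sq by (simp add: power2_eq_square mult_ac)
  also have "\<dots> \<le> (2 * ?x + 3) * (2 * ?x + 1) * 1"
    by (rule mult_left_mono[OF Suc.IH]) simp
  also have "\<dots> \<le> (2 * ?x + 2) ^ 2 * 1"
    by (simp add: power2_eq_square algebra_simps)
  finally show ?case
    by (rule mult_left_le_imp_le) simp
qed

lemma a_tendsto_zero: "a \<longlonglongrightarrow> 0"
proof (rule tendsto_sandwich)
  show "\<forall>\<^sub>F m in sequentially. 0 \<le> a m"
    by (simp add: a_nonneg)
  show "\<forall>\<^sub>F m in sequentially. a m \<le> sqrt (inverse (real (Suc m)))"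
  proof (intro always_eventually allI real_le_rsqrt)
    fix m
    have "(real m + 1) * a m ^ 2 \<le> (2 * real m + 1) * a m ^ 2"
      by (intro mult_right_mono) simp_all
    then have "(real m + 1) * a m ^ 2 \<le> 1"
      using a_squared_le[of m] by linarith
    then show "a m ^ 2 \<le> inverse (real (Suc m))"
      by (simp add: field_simps)
  qed
  show "(\<lambda>m. sqrt (inverse (real (Suc m)))) \<longlonglongrightarrow> 0"
    using tendsto_real_sqrt[OF LIMSEQ_inverse_real_of_nat] by simp
qed simp

lemma a_div_odd:
  assumes "0 < m"
  shows "a m / (2 * real m - 1) = a (m - 1) - a m"
proof -
  obtain k where m: "m = Suc k"
    using assms not0_implies_Suc by blast
  have "a m = (a (m - 1) - a m) * (2 * real m - 1)"
    using a_Suc[of k] by (simp add: m algebra_simps)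
  moreover have "2 * real m - 1 \<noteq> 0"
    using assms by simp
  ultimately show ?thesis
    using nonzero_divide_eq_eq by blast
qed

lemma has_sum_telescope_greaterThan:
  fixes f :: "nat \<Rightarrow> real"
  assumes "decseq f" and "f \<longlonglongrightarrow> 0"
  shows "((\<lambda>m. f (m - 1) - f m) has_sum f n) {n<..}"
proof -
  have "(\<lambda>k. f (n + k)) \<longlonglongrightarrow> 0"
    using LIMSEQ_ignore_initial_segment[OF assms(2), of n] by (simp add: add.commute)
  then have "(\<lambda>k. f (n + k) - f (Suc (n + k))) sums f n"
    using telescope_sums' by fastforce
  then have "((\<lambda>k. f (n + k) - f (Suc (n + k))) has_sum f n) UNIV"
    using decseq_SucD[OF assms(1)] by (intro sums_nonneg_imp_has_sum) simp_all
  moreover have "bij_betw (\<lambda>k. Suc (n + k)) UNIV {n<..}"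
    by (rule bij_betwI[where g = "\<lambda>m. m - Suc n"]) auto
  ultimately show ?thesis
    using has_sum_reindex_bij_betw[of "\<lambda>k. Suc (n + k)" UNIV "{n<..}" "\<lambda>m. f (m - 1) - f m"]
    by simp
qed

definition desc_lists_above :: "nat \<Rightarrow> nat \<Rightarrow> nat list set" where
  "desc_lists_above d n = {ns. length ns = d \<and> sorted_wrt (>) ns \<and> (\<forall>k\<in>set ns. k > n)}"

lemma snoc_in_desc_lists_above:
  "xs @ [m] \<in> desc_lists_above (Suc d) n \<longleftrightarrow> n < m \<and> xs \<in> desc_lists_above d m"
  by (auto simp: desc_lists_above_def sorted_wrt_append)

lemma bij_betw_singleton_desc_lists_above:
  "bij_betw (\<lambda>m. [m]) {n<..} (desc_lists_above 1 n)"
  by (rule bij_betwI[where g = hd]) (auto simp: desc_lists_above_def length_Suc_conv)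

lemma desc_lists_above_Suc_nonempty: "ys \<in> desc_lists_above (Suc d) n \<Longrightarrow> ys \<noteq> []"
  by (auto simp: desc_lists_above_def)

lemma bij_betw_snoc_desc_lists_above:
  "bij_betw (\<lambda>(m, xs). xs @ [m])
     (SIGMA m:{n<..}. desc_lists_above d m) (desc_lists_above (Suc d) n)"
proof (rule bij_betwI[where g = "\<lambda>ys. (last ys, butlast ys)"])
  show "(\<lambda>(m, xs). xs @ [m])
      \<in> (SIGMA m:{n<..}. desc_lists_above d m) \<rightarrow> desc_lists_above (Suc d) n"
    using snoc_in_desc_lists_above by auto
  show "(\<lambda>ys. (last ys, butlast ys))
      \<in> desc_lists_above (Suc d) n \<rightarrow> (SIGMA m:{n<..}. desc_lists_above d m)"
  proof
    fix ys
    assume ys: "ys \<in> desc_lists_above (Suc d) n"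
    then have "butlast ys @ [last ys] \<in> desc_lists_above (Suc d) n"
      using desc_lists_above_Suc_nonempty by simp
    then show "(last ys, butlast ys) \<in> (SIGMA m:{n<..}. desc_lists_above d m)"
      using snoc_in_desc_lists_above by auto
  qed
qed (auto dest: desc_lists_above_Suc_nonempty)

lemma has_sum_desc_lists_above:
  fixes g c :: "nat \<Rightarrow> real"
  assumes tail: "\<And>n. ((\<lambda>m. g m / c m) has_sum g n) {n<..}"
    and g_nonneg: "\<And>m. 0 \<le> g m"
    and c_nonneg: "\<And>m. 0 < m \<Longrightarrow> 0 \<le> c m"
      \<comment> \<open>list entries exceed \<open>n \<ge> 0\<close>, so \<open>c 0\<close> never occurs; it is \<open>-1\<close> in the application\<close>
    and "1 \<le> d"
  shows "((\<lambda>ns. g (hd ns) / (\<Prod>k\<leftarrow>ns. c k)) has_sum g n) (desc_lists_above d n)"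
  using \<open>1 \<le> d\<close>
proof (induction d arbitrary: n rule: dec_induct)
  case base
  show ?case
    using tail[of n] has_sum_reindex_bij_betw[OF bij_betw_singleton_desc_lists_above,
        of "\<lambda>ns. g (hd ns) / (\<Prod>k\<leftarrow>ns. c k)"]
    by simp
next
  case (step d)
  let ?F = "\<lambda>ns. g (hd ns) / (\<Prod>k\<leftarrow>ns. c k)"
  have F_nonneg: "0 \<le> ?F ns" if "ns \<in> desc_lists_above d' m" for ns d' m
    using that
    by (force simp: desc_lists_above_def
        intro!: divide_nonneg_nonneg prod_list_nonneg c_nonneg g_nonneg)
  have F_snoc: "?F (xs @ [m]) = ?F xs / c m" if "xs \<in> desc_lists_above d m'" for xs m m'
    using that step.hyps by (cases xs) (auto simp: desc_lists_above_def)
  have fibre: "((\<lambda>xs. ?F (xs @ [m])) has_sum g m / c m) (desc_lists_above d m)" for m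
  proof -
    have "((\<lambda>xs. ?F xs / c m) has_sum g m / c m) (desc_lists_above d m)"
      using step.IH by (rule has_sum_divide_const)
    then show ?thesis
      by (rule has_sum_cong[THEN iffD2, rotated]) (rule F_snoc)
  qed
  have "((\<lambda>(m, xs). ?F (xs @ [m])) has_sum g n) (SIGMA m:{n<..}. desc_lists_above d m)"
  proof (rule has_sum_SigmaI[OF _ tail])
    show "(\<lambda>(m, xs). ?F (xs @ [m])) summable_on (SIGMA m:{n<..}. desc_lists_above d m)"
    proof (rule summable_on_SigmaI)
      show "0 \<le> (\<lambda>(m, xs). ?F (xs @ [m])) (m, xs)"
        if "m \<in> {n<..}" and "xs \<in> desc_lists_above d m" for m xs
        unfolding prod.case using that
        by (intro F_nonneg[of _ "Suc d" n]) (simp add: snoc_in_desc_lists_above)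
    qed (use fibre has_sum_imp_summable[OF tail] in simp_all)
  qed (use fibre in simp)
  then show ?case
    using has_sum_reindex_bij_betw[OF bij_betw_snoc_desc_lists_above, of ?F]
    by (simp add: case_prod_unfold)
qed

theorem corollary4p3:
  fixes n d :: nat
  assumes "d \<ge> 1"
  shows "((\<lambda>ns. a (hd ns) / (\<Prod>k\<leftarrow>ns. 2 * real k - 1)) has_sum a n)
           {ns :: nat list. length ns = d \<and> sorted_wrt (>) ns \<and> (\<forall>k\<in>set ns. k > n)}"
proof -
  have tail: "((\<lambda>m. a m / (2 * real m - 1)) has_sum a n) {n<..}" for n
  proof -
    have "((\<lambda>m. a (m - 1) - a m) has_sum a n) {n<..}"
      using decseq_a a_tendsto_zero by (rule has_sum_telescope_greaterThan)
    then show ?thesis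
      by (rule has_sum_cong[THEN iffD2, rotated]) (simp add: a_div_odd)
  qed
  show ?thesis
    using has_sum_desc_lists_above[OF tail a_nonneg _ assms]
    by (simp add: desc_lists_above_def)
qed

end
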